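(* Every sequentially distorted subset of a group is strongly bounded.
   Context: A subset $A$ of a group $G$ is sequentially distorted if there is a sequence $(w_n)_{n\in\mathbb N}\subset\mathbb N$ such that for every sequence $(a_n)_{n\in\mathbb N}\subset A$ there is a finite subset $S\subset G$ with $a_n\in S^{w_n}$ for all $n$, where $S^k=\{s_1\cdots s_k: s_i\in S\}$. A subset of $G$ is strongly bounded if it has finite diameter with respect to every left-invariant metric on $G$. *)

theory Defs
  imports Complex_Main "HOL-Algebra.Group"
begin

definition set_power :: "('a, 'b) monoid_scheme \<Rightarrow> 'a set \<Rightarrow> nat \<Rightarrow> 'a set" where
  "set_power G S k =
     {foldr (\<lambda>x y. x \<otimes>\<^bsub>G\<^esub> y) xs \<one>\<^bsub>G\<^esub> | xs. length xs = k \<and> set xs \<subseteq> S}"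

definition sequentially_distorted :: "('a, 'b) monoid_scheme \<Rightarrow> 'a set \<Rightarrow> bool" where
  "sequentially_distorted G A \<longleftrightarrow>
     (\<exists>w :: nat \<Rightarrow> nat. \<forall>a :: nat \<Rightarrow> 'a. (\<forall>n. a n \<in> A) \<longrightarrow>
        (\<exists>S. finite S \<and> S \<subseteq> carrier G \<and> (\<forall>n. a n \<in> set_power G S (w n))))"

definition left_invariant_metric :: "('a, 'b) monoid_scheme \<Rightarrow> ('a \<Rightarrow> 'a \<Rightarrow> real) \<Rightarrow> bool" where
  "left_invariant_metric G d \<longleftrightarrow>
     (\<forall>x\<in>carrier G. \<forall>y\<in>carrier G. 0 \<le> d x y \<and> (d x y = 0 \<longleftrightarrow> x = y) \<and> d x y = d y x) \<and>
     (\<forall>x\<in>carrier G. \<forall>y\<in>carrier G. \<forall>z\<in>carrier G. d x z \<le> d x y + d y z) \<and>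
     (\<forall>g\<in>carrier G. \<forall>x\<in>carrier G. \<forall>y\<in>carrier G. d (g \<otimes>\<^bsub>G\<^esub> x) (g \<otimes>\<^bsub>G\<^esub> y) = d x y)"

definition strongly_bounded :: "('a, 'b) monoid_scheme \<Rightarrow> 'a set \<Rightarrow> bool" where
  "strongly_bounded G A \<longleftrightarrow>
     (\<forall>d. left_invariant_metric G d \<longrightarrow> (\<exists>M::real. \<forall>x\<in>A. \<forall>y\<in>A. d x y \<le> M))"

end

theory Submission
  imports Defs
begin

text \<open>
  Left invariance gives \<open>d(1, s p) \<le> d(1, s) + d(s, s p) = d(1, s) + d(1, p)\<close>, so every
  element of \<open>S\<^sup>k\<close> lies within \<open>k c\<close> of \<open>1\<close>, where \<open>c\<close> is the largest \<open>d(1, s)\<close> with \<open>s \<in> S\<close>.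
  If \<open>d(1, \<cdot>)\<close> were unbounded on \<open>A\<close>, pick \<open>a\<^sub>n \<in> A\<close> with \<open>d(1, a\<^sub>n) > n w\<^sub>n\<close>; the finite
  set \<open>S\<close> that distorts this sequence gives \<open>d(1, a\<^sub>n) \<le> c w\<^sub>n\<close>,
  which fails once \<open>n > c\<close>. A bounded distance from \<open>1\<close> bounds the diameter by the
  triangle inequality.
\<close>

lemma left_invariant_metric_self:
  "left_invariant_metric G d \<Longrightarrow> x \<in> carrier G \<Longrightarrow> d x x = 0"
  unfolding left_invariant_metric_def by blast

lemma left_invariant_metric_commute:
  "left_invariant_metric G d \<Longrightarrow> x \<in> carrier G \<Longrightarrow> y \<in> carrier G \<Longrightarrow> d x y = d y x"
  unfolding left_invariant_metric_def by blast

lemma left_invariant_metric_triangle: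
  "left_invariant_metric G d \<Longrightarrow> x \<in> carrier G \<Longrightarrow> y \<in> carrier G \<Longrightarrow> z \<in> carrier G \<Longrightarrow>
    d x z \<le> d x y + d y z"
  unfolding left_invariant_metric_def by blast

lemma left_invariant_metric_mult_left:
  "left_invariant_metric G d \<Longrightarrow> g \<in> carrier G \<Longrightarrow> x \<in> carrier G \<Longrightarrow> y \<in> carrier G \<Longrightarrow>
    d (g \<otimes>\<^bsub>G\<^esub> x) (g \<otimes>\<^bsub>G\<^esub> y) = d x y"
  unfolding left_invariant_metric_def by blast

context monoid
begin

lemma foldr_mult_closed:
  "set xs \<subseteq> carrier G \<Longrightarrow> foldr (\<otimes>) xs \<one> \<in> carrier G"
  by (induction xs) auto

lemma dist_one_mult_le:
  assumes d: "left_invariant_metric G d" and s: "s \<in> carrier G" and p: "p \<in> carrier G"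
  shows "d \<one> (s \<otimes> p) \<le> d \<one> s + d \<one> p"
proof -
  have "d \<one> (s \<otimes> p) \<le> d \<one> s + d s (s \<otimes> p)"
    using left_invariant_metric_triangle[OF d] s p by simp
  also have "d s (s \<otimes> p) = d \<one> p"
    using left_invariant_metric_mult_left[OF d s one_closed p] s by simp
  finally show ?thesis .
qed

lemma dist_one_foldr_le:
  assumes d: "left_invariant_metric G d" and xs: "set xs \<subseteq> carrier G"
    and c: "\<And>s. s \<in> set xs \<Longrightarrow> d \<one> s \<le> c"
  shows "d \<one> (foldr (\<otimes>) xs \<one>) \<le> real (length xs) * c"
  using xs c
proof (induction xs)
  case Nil
  then show ?case
    using left_invariant_metric_self[OF d] by simp
next
  case (Cons s xs)
  have "d \<one> (s \<otimes> foldr (\<otimes>) xs \<one>) \<le> d \<one> s + d \<one> (foldr (\<otimes>) xs \<one>)"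
    using Cons.prems(1) dist_one_mult_le[OF d] foldr_mult_closed by simp
  also have "\<dots> \<le> c + real (length xs) * c"
    using Cons by (intro add_mono) simp_all
  finally show ?case
    by (simp add: algebra_simps)
qed

lemma set_power_dist_one_le:
  assumes d: "left_invariant_metric G d" and S: "finite S" "S \<subseteq> carrier G"
  obtains c where "\<And>k x. x \<in> set_power G S k \<Longrightarrow> d \<one> x \<le> real k * c"
proof
  define c where "c = Max (insert 0 ((\<lambda>s. d \<one> s) ` S))"
  have c: "d \<one> s \<le> c" if "s \<in> S" for s
    unfolding c_def using S(1) that by simp
  fix k x
  assume "x \<in> set_power G S k"
  then obtain xs where "x = foldr (\<otimes>) xs \<one>" "length xs = k" "set xs \<subseteq> S"
    unfolding set_power_def by blast
  then show "d \<one> x \<le> real k * c"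
    using dist_one_foldr_le[OF d] S(2) c by blast
qed

lemma sequentially_distorted_dist_one_bounded:
  assumes A: "sequentially_distorted G A" and d: "left_invariant_metric G d"
  shows "\<exists>B. \<forall>x\<in>A. d \<one> x \<le> B"
proof (rule ccontr)
  assume unbounded: "\<nexists>B. \<forall>x\<in>A. d \<one> x \<le> B"
  obtain w :: "nat \<Rightarrow> nat" where w: "\<And>a. \<forall>n. a n \<in> A \<Longrightarrow>
      \<exists>S. finite S \<and> S \<subseteq> carrier G \<and> (\<forall>n. a n \<in> set_power G S (w n))"
    using A unfolding sequentially_distorted_def by blast
  have "\<forall>n. \<exists>x\<in>A. d \<one> x > real (w n) * real n"
    using unbounded by (meson not_le)
  then obtain a where a: "\<And>n. a n \<in> A" "\<And>n. d \<one> (a n) > real (w n) * real n"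
    by metis
  obtain S where S: "finite S" "S \<subseteq> carrier G" "\<And>n. a n \<in> set_power G S (w n)"
    using w[of a] a(1) by blast
  obtain c where c: "\<And>k x. x \<in> set_power G S k \<Longrightarrow> d \<one> x \<le> real k * c"
    using set_power_dist_one_le[OF d S(1,2)] by blast
  obtain n :: nat where "c < real n"
    using reals_Archimedean2 by blast
  then have "real (w n) * c \<le> real (w n) * real n"
    by (simp add: mult_left_mono)
  then show False
    using a(2)[of n] c[OF S(3)[of n]] by linarith
qed

end

lemma bounded_diameter_if_dist_one_bounded:
  assumes d: "left_invariant_metric G d" and one: "\<one>\<^bsub>G\<^esub> \<in> carrier G"
    and A: "A \<subseteq> carrier G" and B: "\<And>x. x \<in> A \<Longrightarrow> d \<one>\<^bsub>G\<^esub> x \<le> B"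
  shows "\<forall>x\<in>A. \<forall>y\<in>A. d x y \<le> 2 * B"
proof (intro ballI)
  fix x y
  assume x: "x \<in> A" and y: "y \<in> A"
  then have "d x y \<le> d x \<one>\<^bsub>G\<^esub> + d \<one>\<^bsub>G\<^esub> y"
    using left_invariant_metric_triangle[OF d] A one by blast
  also have "d x \<one>\<^bsub>G\<^esub> = d \<one>\<^bsub>G\<^esub> x"
    using left_invariant_metric_commute[OF d] A one x by blast
  finally show "d x y \<le> 2 * B"
    using B[OF x] B[OF y] by linarith
qed

theorem lemma3p3:
  assumes "group G" and "A \<subseteq> carrier G" and "sequentially_distorted G A"
  shows "strongly_bounded G A"
  unfolding strongly_bounded_def
proof (intro allI impI)
  fix d
  assume d: "left_invariant_metric G d"
  interpret monoid G
    using assms(1) by (rule group.is_monoid)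
  obtain B where "\<And>x. x \<in> A \<Longrightarrow> d \<one>\<^bsub>G\<^esub> x \<le> B"
    using sequentially_distorted_dist_one_bounded[OF assms(3) d] by blast
  then show "\<exists>M. \<forall>x\<in>A. \<forall>y\<in>A. d x y \<le> M"
    using bounded_diameter_if_dist_one_bounded[OF d one_closed assms(2)] by blast
qed

end
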